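(* Let $x>0$, $t>0$ and, for $\mu>0$, let $T(\mu)=\sqrt{\mu^2/4-1}$ with $\Im T\ge0$. Let $f(z,\mu)$ be defined for $\Im z\ge0$ by $f(z,\mu)=\left(\frac{\mu}{2}-z\right)\left[\frac{\pi i}{2}+\ln\left(\frac{\mu}{2}-z\right)\right]+\frac{z+T}{2}\ln(z+T)+\frac{z-T}{2}\ln(z-T)-T\tanh^{-1}\frac{T}{\mu/2}-xz-2tz^2+\frac{\mu}{2}\ln 2$ and by $f(z,\mu)=\overline{f(\bar z,\mu)}$ for $\Im z<0$. Then $f(z,\mu)$ and $f'(z,\mu)=\frac{\partial f}{\partial z}(z,\mu)$ are analytic in $\mu$ for $\mu>0$, for every $z$ with $\Im z\neq 0$ and $z\notin[-T(\mu),T(\mu)]$.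
   Context: Branch cuts of the logarithms: for $0<\mu<2$ (where $T$ is purely imaginary with $\Im T>0$), from $\mu/2$ along the real axis to $+\infty$, from $T$ to $0$ and then along the real axis to $+\infty$, from $-T$ to $0$ and then along the real axis to $-\infty$; for $\mu\ge 2$ (where $T\ge0$), from $T$ to $+\infty$ and from $-T$ to $-\infty$ along the real axis. $[-T,T]$ denotes the straight segment from $-T$ to $T$. *)

theory Defs
  imports "HOL-Analysis.Analysis"
begin

text \<open>T(mu) = sqrt(mu^2/4 - 1) with Im T >= 0 (csqrt of a negative real is i*sqrt).\<close>
definition T :: "real \<Rightarrow> complex" where
  "T \<mu> = csqrt (complex_of_real (\<mu>^2 / 4 - 1))"

definition cartanh :: "complex \<Rightarrow> complex" where
  "cartanh u = (Ln (1 + u) - Ln (1 - u)) / 2"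

text \<open>Logarithm with argument in (-pi/2, 3pi/2], i.e. cut along the negative imaginary axis.
  Used for ln(z - T): on the upper half plane Im z > 0 its cut is exactly the segment
  from T to 0 (for 0 < mu < 2), and for mu >= 2 it agrees with the principal log there.\<close>
definition ln_rot :: "complex \<Rightarrow> complex" where
  "ln_rot w = Ln (- \<i> * w) + \<i> * complex_of_real pi / 2"

definition f_upper :: "real \<Rightarrow> real \<Rightarrow> complex \<Rightarrow> real \<Rightarrow> complex" where
  "f_upper x t z \<mu> =
     (complex_of_real (\<mu>/2) - z) * (\<i> * complex_of_real pi / 2 + Ln (complex_of_real (\<mu>/2) - z))
   + (z + T \<mu>) / 2 * Ln (z + T \<mu>)
   + (z - T \<mu>) / 2 * ln_rot (z - T \<mu>)
   - T \<mu> * cartanh (T \<mu> / complex_of_real (\<mu>/2))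
   - complex_of_real x * z - 2 * complex_of_real t * z^2
   + complex_of_real (\<mu>/2 * ln 2)"

definition f :: "real \<Rightarrow> real \<Rightarrow> complex \<Rightarrow> real \<Rightarrow> complex" where
  "f x t z \<mu> = (if Im z \<ge> 0 then f_upper x t z \<mu> else cnj (f_upper x t (cnj z) \<mu>))"

definition real_analytic_at :: "(real \<Rightarrow> complex) \<Rightarrow> real \<Rightarrow> bool" where
  "real_analytic_at g a \<longleftrightarrow>
     (\<exists>r>0. \<exists>c::nat \<Rightarrow> complex. \<forall>\<nu>. \<bar>\<nu> - a\<bar> < r \<longrightarrow>
        (\<lambda>n. c n * complex_of_real (\<nu> - a) ^ n) sums g \<nu>)"

end

theory Submission
  imports Defs "HOL-Complex_Analysis.Complex_Analysis"
begin

text \<open>For \<open>Im z > 0\<close>, \<open>f\<close> and \<open>\<partial>f/\<partial>z\<close> are explicit expressions \<open>F(\<mu>, T(\<mu>))\<close> built from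
  logarithms, holomorphic in \<open>(\<mu>, T)\<close> as long as every logarithm stays off its cut, which is
  an open condition satisfied at the given \<open>\<mu>\<close>. For \<open>\<mu> \<noteq> 2\<close> the value \<open>T(\<mu>)\<close> is a holomorphic
  branch of \<open>\<surd>(\<mu>\<^sup>2/4 - 1)\<close> near \<open>\<mu>\<close>, so \<open>F(\<mu>, T(\<mu>))\<close> extends holomorphically to a complex
  neighbourhood of \<open>\<mu>\<close> and hence is a power series in \<open>\<mu>\<close>. At the branch point \<open>\<mu> = 2\<close>, where
  \<open>T(2) = 0\<close>, the expression is even in \<open>T\<close> (the rotated logarithm agrees with \<open>Ln\<close> on the
  upper half plane), so it is a holomorphic function of \<open>T\<^sup>2 = \<mu>\<^sup>2/4 - 1\<close>. The lower half plane
  follows by reflection.\<close>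

lemma real_analytic_at_holomorphic:
  assumes hol: "G holomorphic_on S" and S: "open S" and a: "complex_of_real a \<in> S"
    and eq: "\<And>\<nu>. complex_of_real \<nu> \<in> S \<Longrightarrow> g \<nu> = G (of_real \<nu>)"
  shows "real_analytic_at g a"
proof -
  obtain r where r: "r > 0" "ball (complex_of_real a) r \<subseteq> S"
    using S a openE by blast
  have hol_ball: "G holomorphic_on ball (complex_of_real a) r"
    using hol r holomorphic_on_subset by blast
  show ?thesis
    unfolding real_analytic_at_def
  proof (intro exI conjI allI impI)
    fix \<nu> assume "\<bar>\<nu> - a\<bar> < r"
    then have \<nu>: "complex_of_real \<nu> \<in> ball (complex_of_real a) r"
      by (simp add: dist_complex_def dist_norm norm_of_real flip: of_real_diff)
    have "(\<lambda>n. (deriv ^^ n) G (of_real a) / fact n * (of_real \<nu> - of_real a)^n) sums G (of_real \<nu>)"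
      by (rule holomorphic_power_series[OF hol_ball \<nu>])
    then show "(\<lambda>n. (deriv ^^ n) G (of_real a) / fact n * complex_of_real (\<nu> - a) ^ n) sums g \<nu>"
      using eq[of \<nu>] \<nu> r by (simp add: subset_iff)
  qed (use r in auto)
qed

lemma real_analytic_at_cnj:
  assumes "real_analytic_at g a"
  shows "real_analytic_at (\<lambda>\<nu>. cnj (g \<nu>)) a"
proof -
  obtain r c where r: "r > 0" and sums: "\<And>\<nu>. \<bar>\<nu> - a\<bar> < r \<Longrightarrow>
        (\<lambda>n. c n * complex_of_real (\<nu> - a) ^ n) sums g \<nu>"
    using assms unfolding real_analytic_at_def by blast
  show ?thesis unfolding real_analytic_at_def
  proof (intro exI[of _ r] exI[of _ "\<lambda>n. cnj (c n)"] conjI allI impI)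
    fix \<nu> assume "\<bar>\<nu> - a\<bar> < r"
    from sums[OF this] have "(\<lambda>n. cnj (c n * complex_of_real (\<nu> - a) ^ n)) sums cnj (g \<nu>)"
      by (simp only: sums_cnj)
    then show "(\<lambda>n. cnj (c n) * complex_of_real (\<nu> - a) ^ n) sums cnj (g \<nu>)" by simp
  qed (use r in auto)
qed

lemma real_analytic_at_eventually_eq:
  assumes "real_analytic_at h a" "eventually (\<lambda>\<nu>. g \<nu> = h \<nu>) (nhds a)"
  shows "real_analytic_at g a"
proof -
  obtain e where e: "e > 0" "\<And>\<nu>. dist \<nu> a < e \<Longrightarrow> g \<nu> = h \<nu>"
    using assms(2) unfolding eventually_nhds_metric by blast
  obtain r c where "r > 0" and "\<And>\<nu>. \<bar>\<nu> - a\<bar> < r \<Longrightarrow>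
        (\<lambda>n. c n * complex_of_real (\<nu> - a) ^ n) sums h \<nu>"
    using assms(1) unfolding real_analytic_at_def by blast
  then show ?thesis unfolding real_analytic_at_def
    by (intro exI[of _ "min r e"]) (use e in \<open>auto simp: dist_real_def\<close>)
qed

lemma csqrt_in_ball: "s \<in> ball 0 (r^2) \<Longrightarrow> r > 0 \<Longrightarrow> csqrt s \<in> ball 0 r"
  using real_sqrt_less_mono[of "norm s" "r^2"] by simp

lemma tendsto_csqrt_0: "(csqrt \<longlongrightarrow> 0) (at 0)"
proof -
  have "((\<lambda>s::complex. sqrt (norm s)) \<longlongrightarrow> sqrt (norm (0::complex))) (at 0)"
    by (intro tendsto_intros)
  then have "((\<lambda>s. norm (csqrt s)) \<longlongrightarrow> 0) (at (0::complex))" by simp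
  then show ?thesis by (rule tendsto_norm_zero_cancel)
qed

lemma even_comp_ii_csqrt_minus:
  assumes r: "r > 0" and even: "\<And>\<tau>. \<tau> \<in> ball 0 r \<Longrightarrow> K (-\<tau>) = K \<tau>"
    and s: "s \<in> ball 0 (r^2)"
  shows "K (\<i> * csqrt (-s)) = K (csqrt s)"
proof -
  have "(\<i> * csqrt (-s))^2 = (csqrt s)^2" by (simp add: power_mult_distrib)
  then have "\<i> * csqrt (-s) = csqrt s \<or> \<i> * csqrt (-s) = - csqrt s"
    using power2_eq_iff by blast
  moreover have "\<i> * csqrt (-s) \<in> ball 0 r"
    using csqrt_in_ball[of "-s" r] s r by (simp add: norm_mult)
  ultimately show ?thesis using even by force
qed

text \<open>An even function holomorphic near \<open>0\<close> is a holomorphic function of the square of its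
  argument: off the negative reals use \<open>csqrt\<close>, off the positive reals use \<open>\<i> * csqrt (- s)\<close>,
  and the remaining singularity at \<open>0\<close> is removable.\<close>
lemma holomorphic_on_even_comp_csqrt:
  assumes r: "r > 0" and hol: "K holomorphic_on ball 0 r"
    and even: "\<And>\<tau>. \<tau> \<in> ball 0 r \<Longrightarrow> K (-\<tau>) = K \<tau>"
  shows "(\<lambda>s. K (csqrt s)) holomorphic_on ball 0 (r^2)"
proof -
  define U1 where "U1 = ball (0::complex) (r^2) \<inter> - \<real>\<^sub>\<le>\<^sub>0"
  define U2 where "U2 = ball (0::complex) (r^2) \<inter> - \<real>\<^sub>\<ge>\<^sub>0"
  have open_U: "open U1" "open U2" unfolding U1_def U2_def
    by (intro open_Int open_ball open_Compl closed_nonpos_Reals_complex closed_nonneg_Reals_complex)+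
  have "(K \<circ> csqrt) holomorphic_on U1"
    by (rule holomorphic_on_compose)
       (auto simp: U1_def intro: holomorphic_on_subset[OF holomorphic_on_csqrt]
          holomorphic_on_subset[OF hol] csqrt_in_ball r)
  then have hol_U1: "(\<lambda>s. K (csqrt s)) holomorphic_on U1" by (simp add: o_def)
  have in_ball: "\<i> * csqrt (-s) \<in> ball 0 r" if "s \<in> ball 0 (r^2)" for s
    using csqrt_in_ball[of "-s" r] that r by (simp add: norm_mult)
  have "(\<lambda>s. \<i> * csqrt (-s)) holomorphic_on U2"
    by (intro holomorphic_intros) (auto simp: U2_def complex_nonpos_Reals_iff complex_nonneg_Reals_iff)
  then have "(K \<circ> (\<lambda>s. \<i> * csqrt (-s))) holomorphic_on U2"
    by (rule holomorphic_on_compose) (auto simp: U2_def intro: holomorphic_on_subset[OF hol] in_ball)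
  then have hol_U2: "(\<lambda>s. K (csqrt s)) holomorphic_on U2"
    by (rule holomorphic_transform)
       (use even_comp_ii_csqrt_minus[of r K, OF r even] in \<open>simp add: U2_def\<close>)
  have "U1 \<union> U2 = ball 0 (r^2) - {0}"
    by (auto simp: U1_def U2_def complex_nonpos_Reals_iff complex_nonneg_Reals_iff complex_eq_iff)
  then have hol_punctured: "(\<lambda>s. K (csqrt s)) holomorphic_on (ball 0 (r^2) - {0})"
    using holomorphic_on_Un[OF hol_U1 hol_U2 open_U] by simp
  have "isCont K 0"
    using holomorphic_on_imp_continuous_on[OF hol] r
    by (simp add: continuous_on_eq_continuous_at)
  then have "((\<lambda>s. K (csqrt s)) \<longlongrightarrow> K 0) (at 0)"
    using isCont_tendsto_compose tendsto_csqrt_0 by blast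
  then have "((\<lambda>s. K (csqrt s)) \<longlongrightarrow> K 0) (at 0 within ball 0 (r^2))"
    by (rule tendsto_mono[OF at_le[OF subset_UNIV]])
  then have lim: "((\<lambda>s. K (csqrt s)) \<longlongrightarrow> K (csqrt 0)) (at 0 within ball 0 (r^2))"
    by simp
  show ?thesis
    by (rule no_isolated_singularity'[of "{0}"]) (use lim hol_punctured in auto)
qed

lemma Ln_minus_ii_times:
  assumes "Im w > 0"
  shows "Ln (-\<i> * w) + \<i> * of_real pi / 2 = Ln w"
proof -
  have "\<bar>Im (Ln (-\<i> * w))\<bar> < pi/2"
    by (rule Re_Ln_pos_lt_imp) (use assms in simp)
  moreover have "exp (Ln (-\<i> * w) + \<i> * of_real pi / 2) = w"
  proof -
    have "exp (\<i> * of_real (pi/2)) = \<i>"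
      using cis_conv_exp[of "pi/2"] by (simp add: complex_eq_iff)
    moreover have "w \<noteq> 0" using assms by auto
    ultimately show ?thesis by (simp add: exp_add mult.commute mult.left_commute)
  qed
  ultimately show ?thesis
    using Ln_exp[of "Ln (-\<i> * w) + \<i> * of_real pi / 2"] by auto
qed

lemma T_imaginary: "\<nu>^2/4 - 1 \<le> 0 \<Longrightarrow> T \<nu> = \<i> * of_real (sqrt (1 - \<nu>^2/4))"
  unfolding T_def by (subst csqrt_of_real_nonpos) auto

lemma T_real: "\<nu>^2/4 - 1 \<ge> 0 \<Longrightarrow> T \<nu> = of_real (sqrt (\<nu>^2/4 - 1))"
  unfolding T_def by (subst csqrt_of_real_nonneg) auto

lemma T_eq_ii_csqrt: "1 - \<nu>^2/4 > 0 \<Longrightarrow> T \<nu> = \<i> * csqrt (1 - (of_real \<nu>)^2/4)"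
  using T_imaginary[of \<nu>] csqrt_of_real[of "1 - \<nu>^2/4"] by simp

lemma continuous_on_T: "continuous_on A T"
proof -
  have T_eq: "T = (\<lambda>\<nu>. of_real (sqrt (max 0 (\<nu>^2/4 - 1))) + \<i> * of_real (sqrt (max 0 (1 - \<nu>^2/4))))"
    by (rule ext) (auto simp: max_def T_imaginary T_real)
  show ?thesis unfolding T_eq by (intro continuous_intros) auto
qed

lemma two_csqrt_one_plus_T_sq: "\<nu> > 0 \<Longrightarrow> 2 * csqrt (1 + (T \<nu>)^2) = complex_of_real \<nu>"
proof -
  assume "\<nu> > 0"
  then have sqrt_eq: "sqrt (\<nu>^2/4) = \<nu>/2"
    by (intro real_sqrt_unique) (auto simp: power_divide)
  have "1 + (T \<nu>)^2 = complex_of_real (\<nu>^2/4)" by (simp add: T_def)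
  then have "csqrt (1 + (T \<nu>)^2) = of_real (sqrt (\<nu>^2/4))"
    by (simp only:) (rule csqrt_of_real, simp)
  then show ?thesis by (simp add: sqrt_eq mult.commute)
qed

lemma closed_segment_T_cnj:
  assumes "cnj z \<in> closed_segment (- T \<mu>) (T \<mu>)"
  shows "z \<in> closed_segment (- T \<mu>) (T \<mu>)"
proof -
  have "z \<in> cnj ` closed_segment (- T \<mu>) (T \<mu>)"
    using assms by (metis complex_cnj_cnj image_eqI)
  then have z: "z \<in> closed_segment (cnj (- T \<mu>)) (cnj (T \<mu>))"
    by (simp only: closed_segment_linear_image[OF bounded_linear.linear[OF bounded_linear_cnj]])
  show ?thesis
  proof (cases "\<mu>^2/4 - 1 \<le> 0")
    case True
    then show ?thesis using z T_imaginary[of \<mu>] by (simp add: closed_segment_commute)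
  next
    case False
    then show ?thesis using z T_real[of \<mu>] by simp
  qed
qed

text \<open>\<open>f_upper\<close> with \<open>\<mu>\<close> and \<open>T(\<mu>)\<close> replaced by independent complex variables \<open>m\<close> and \<open>\<tau>\<close>,
  together with its \<open>z\<close>-derivative; \<open>branch_ok\<close> keeps every logarithm off its cut.\<close>
definition F :: "real \<Rightarrow> real \<Rightarrow> complex \<Rightarrow> complex \<Rightarrow> complex \<Rightarrow> complex" where
  "F x t z m \<tau> = (m/2 - z) * (\<i> * of_real pi/2 + Ln (m/2 - z)) + (z+\<tau>)/2 * Ln(z+\<tau>)
    + (z-\<tau>)/2 * (Ln(-\<i>*(z-\<tau>)) + \<i> * of_real pi / 2)
    - \<tau> * ((Ln(1 + \<tau>/(m/2)) - Ln(1 - \<tau>/(m/2)))/2)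
    - of_real x * z - 2 * of_real t * z^2 + m/2 * of_real (ln 2)"

definition F_deriv :: "real \<Rightarrow> real \<Rightarrow> complex \<Rightarrow> complex \<Rightarrow> complex \<Rightarrow> complex" where
  "F_deriv x t z m \<tau> = - (\<i> * of_real pi/2) - Ln(m/2 - z)
    + (Ln(z+\<tau>) + (Ln(-\<i>*(z-\<tau>)) + \<i> * of_real pi/2))/2 - of_real x - 4 * of_real t * z"

definition branch_ok :: "complex \<Rightarrow> complex \<Rightarrow> complex \<Rightarrow> bool" where
  "branch_ok z m \<tau> \<longleftrightarrow> m/2 - z \<notin> \<real>\<^sub>\<le>\<^sub>0 \<and> z+\<tau> \<notin> \<real>\<^sub>\<le>\<^sub>0 \<and> -\<i>*(z-\<tau>) \<notin> \<real>\<^sub>\<le>\<^sub>0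
    \<and> 1 + \<tau>/(m/2) \<notin> \<real>\<^sub>\<le>\<^sub>0 \<and> 1 - \<tau>/(m/2) \<notin> \<real>\<^sub>\<le>\<^sub>0 \<and> m \<noteq> 0"

definition holomorphic_on_branches :: "complex \<Rightarrow> (complex \<Rightarrow> complex \<Rightarrow> complex) \<Rightarrow> bool" where
  "holomorphic_on_branches z E \<longleftrightarrow> (\<forall>S h g. h holomorphic_on S \<longrightarrow> g holomorphic_on S \<longrightarrow>
     (\<forall>m\<in>S. branch_ok z (h m) (g m)) \<longrightarrow> (\<lambda>m. E (h m) (g m)) holomorphic_on S)"

lemma holomorphic_on_branchesD:
  assumes "holomorphic_on_branches z E" "h holomorphic_on S" "g holomorphic_on S"
    "\<And>m. m \<in> S \<Longrightarrow> branch_ok z (h m) (g m)"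
  shows "(\<lambda>m. E (h m) (g m)) holomorphic_on S"
  using assms unfolding holomorphic_on_branches_def by blast

lemma f_upper_eq_F: "f_upper x t z \<nu> = F x t z (of_real \<nu>) (T \<nu>)"
  unfolding f_upper_def F_def ln_rot_def cartanh_def by simp

lemma has_field_derivative_F:
  assumes "branch_ok z m \<tau>"
  shows "((\<lambda>w. F x t w m \<tau>) has_field_derivative F_deriv x t z m \<tau>) (at z)"
proof -
  have cuts: "m/2 - z \<notin> \<real>\<^sub>\<le>\<^sub>0" "z+\<tau> \<notin> \<real>\<^sub>\<le>\<^sub>0" "-\<i>*(z-\<tau>) \<notin> \<real>\<^sub>\<le>\<^sub>0"
    using assms by (auto simp: branch_ok_def)
  then have nonzero: "m/2 - z \<noteq> 0" "z + \<tau> \<noteq> 0" "z - \<tau> \<noteq> 0" by auto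
  show ?thesis
    unfolding F_def F_deriv_def
    apply (rule derivative_eq_intros refl cuts | simp)+
    using nonzero by (simp add: field_simps)
qed

lemma holomorphic_on_branches_F: "holomorphic_on_branches z (F x t z)"
  unfolding holomorphic_on_branches_def F_def branch_ok_def
  by (auto intro!: holomorphic_intros)

lemma holomorphic_on_branches_F_deriv: "holomorphic_on_branches z (F_deriv x t z)"
  unfolding holomorphic_on_branches_def F_deriv_def branch_ok_def
  by (auto intro!: holomorphic_intros)

lemma F_even:
  assumes "Im (z+\<tau>) > 0" "Im (z-\<tau>) > 0"
  shows "F x t z m (-\<tau>) = F x t z m \<tau>"
  using Ln_minus_ii_times[OF assms(1)] Ln_minus_ii_times[OF assms(2)]
  unfolding F_def by (simp add: field_simps)

lemma F_deriv_even:
  assumes "Im (z+\<tau>) > 0" "Im (z-\<tau>) > 0"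
  shows "F_deriv x t z m (-\<tau>) = F_deriv x t z m \<tau>"
  using Ln_minus_ii_times[OF assms(1)] Ln_minus_ii_times[OF assms(2)]
  unfolding F_deriv_def by (simp add: field_simps)

lemma open_branch_ok:
  fixes A :: "'a::topological_space set"
  assumes "open A" "continuous_on A h" "continuous_on A g"
  shows "open {m \<in> A. branch_ok z (h m) (g m)}"
proof -
  define A' where "A' = A \<inter> h -` (- {0})"
  have open_A': "open A'" unfolding A'_def
    by (rule continuous_open_preimage[OF assms(2,1)]) auto
  have cont: "continuous_on A' g" "continuous_on A' h" using assms(2,3)
    by (auto simp: A'_def intro: continuous_on_subset)
  have open_off_cut: "open (A' \<inter> k -` (- \<real>\<^sub>\<le>\<^sub>0))" if "continuous_on A' k" for k :: "'a \<Rightarrow> complex"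
    by (rule continuous_open_preimage[OF that open_A']) auto
  have "{m \<in> A. branch_ok z (h m) (g m)} =
     (A' \<inter> (\<lambda>m. h m/2 - z) -` (- \<real>\<^sub>\<le>\<^sub>0)) \<inter> (A' \<inter> (\<lambda>m. z + g m) -` (- \<real>\<^sub>\<le>\<^sub>0))
     \<inter> (A' \<inter> (\<lambda>m. -\<i>*(z - g m)) -` (- \<real>\<^sub>\<le>\<^sub>0)) \<inter> (A' \<inter> (\<lambda>m. 1 + g m/(h m/2)) -` (- \<real>\<^sub>\<le>\<^sub>0))
     \<inter> (A' \<inter> (\<lambda>m. 1 - g m/(h m/2)) -` (- \<real>\<^sub>\<le>\<^sub>0))"
    by (auto simp: A'_def branch_ok_def)
  also have "open \<dots>"
    using cont by (intro open_Int open_off_cut continuous_intros) (auto simp: A'_def)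
  finally show ?thesis .
qed

lemma branch_ok_imaginary:
  assumes z: "Im z > 0" and \<mu>: "\<mu> > 0" and s: "s \<ge> 0"
    and seg: "z \<notin> closed_segment (-(\<i> * of_real s)) (\<i> * of_real s)"
  shows "branch_ok z (of_real \<mu>) (\<i> * of_real s)"
proof -
  have quotient: "(\<i> * of_real s) / (of_real \<mu>/2) = \<i> * of_real (2 * s / \<mu>)"
    using \<mu> by (simp add: field_simps)
  have "-\<i>*(z - \<i> * of_real s) \<notin> \<real>\<^sub>\<le>\<^sub>0"
  proof
    assume "-\<i>*(z - \<i> * of_real s) \<in> \<real>\<^sub>\<le>\<^sub>0"
    then have on_axis: "Im z \<le> s" "Re z = 0" by (auto simp: complex_nonpos_Reals_iff)
    then have "s > 0" using z by linarith
    define u where "u = (Im z / s + 1) / 2"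
    have "0 \<le> u" "u \<le> 1" using on_axis z \<open>s > 0\<close> by (auto simp: u_def field_simps)
    moreover have "z = (1 - u) *\<^sub>R (-(\<i> * of_real s)) + u *\<^sub>R (\<i> * of_real s)"
      using on_axis \<open>s > 0\<close> by (simp add: complex_eq_iff u_def field_simps scaleR_conv_of_real)
    ultimately have "z \<in> closed_segment (-(\<i> * of_real s)) (\<i> * of_real s)"
      unfolding closed_segment_def by blast
    then show False using seg by blast
  qed
  then show ?thesis
    unfolding branch_ok_def quotient using z \<mu> s by (auto simp: complex_nonpos_Reals_iff)
qed

lemma branch_ok_real:
  assumes z: "Im z > 0" and \<mu>: "\<mu> > 0" and s: "s \<ge> 0" "s < \<mu>/2"
  shows "branch_ok z (of_real \<mu>) (of_real s)"
proof -
  have quotient: "(of_real s) / (of_real \<mu>/2) = (of_real (2 * s / \<mu>) :: complex)"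
    using \<mu> by (simp add: field_simps)
  have "0 \<le> 2 * s / \<mu>" "2 * s / \<mu> < 1" using s \<mu> by (simp_all add: field_simps)
  then show ?thesis
    unfolding branch_ok_def quotient using z \<mu> by (auto simp: complex_nonpos_Reals_iff)
qed

lemma branch_ok_T:
  assumes z: "Im z > 0" and \<mu>: "\<mu> > 0" and seg: "z \<notin> closed_segment (- T \<mu>) (T \<mu>)"
  shows "branch_ok z (of_real \<mu>) (T \<mu>)"
proof (cases "\<mu>^2/4 - 1 \<le> 0")
  case True
  then show ?thesis
    using branch_ok_imaginary[OF z \<mu>] seg T_imaginary[OF True] by simp
next
  case False
  have "sqrt (\<mu>^2/4 - 1) < sqrt ((\<mu>/2)^2)"
    by (rule real_sqrt_less_mono) (simp add: power_divide)
  then have "sqrt (\<mu>^2/4 - 1) < \<mu>/2" using \<mu> by simp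
  then show ?thesis
    using branch_ok_real[OF z \<mu>] False T_real[of \<mu>] by simp
qed

lemma eventually_branch_ok_T:
  assumes "Im z > 0" "\<mu> > 0" "z \<notin> closed_segment (- T \<mu>) (T \<mu>)"
  shows "eventually (\<lambda>\<nu>. branch_ok z (of_real \<nu>) (T \<nu>)) (nhds \<mu>)"
proof -
  have "open {\<nu> \<in> UNIV. branch_ok z (of_real \<nu>) (T \<nu>)}"
    by (rule open_branch_ok) (auto intro: continuous_on_T continuous_intros)
  then show ?thesis
    using eventually_nhds_in_open branch_ok_T[OF assms] by fastforce
qed

lemma real_analytic_at_comp_holomorphic_branch:
  assumes "holomorphic_on_branches z E" and "open A" "complex_of_real \<mu> \<in> A" "g holomorphic_on A"
    and g_T: "\<And>\<nu>. complex_of_real \<nu> \<in> A \<Longrightarrow> g (of_real \<nu>) = T \<nu>"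
    and "branch_ok z (of_real \<mu>) (T \<mu>)"
  shows "real_analytic_at (\<lambda>\<nu>. E (of_real \<nu>) (T \<nu>)) \<mu>"
proof -
  define S where "S = {m \<in> A. branch_ok z m (g m)}"
  have "g holomorphic_on S" by (rule holomorphic_on_subset[OF assms(4)]) (auto simp: S_def)
  then have "(\<lambda>m. E m (g m)) holomorphic_on S"
    by (rule holomorphic_on_branchesD[OF assms(1) holomorphic_on_ident]) (simp add: S_def)
  moreover have "open S" unfolding S_def
    using assms(2,4) by (intro open_branch_ok holomorphic_on_imp_continuous_on) (auto intro: continuous_intros)
  moreover have "complex_of_real \<mu> \<in> S" using assms(3,6) g_T by (simp add: S_def)
  ultimately show ?thesis
    by (rule real_analytic_at_holomorphic) (simp add: S_def g_T)
qed

lemma real_analytic_at_even_comp_T: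
  assumes r: "r > 0" and hol: "K holomorphic_on ball 0 r"
    and even: "\<And>\<tau>. \<tau> \<in> ball 0 r \<Longrightarrow> K (-\<tau>) = K \<tau>"
  shows "real_analytic_at (\<lambda>\<nu>. K (T \<nu>)) 2"
proof -
  define S where "S = (\<lambda>m::complex. m^2/4 - 1) -` ball 0 (r^2)"
  have "((\<lambda>s. K (csqrt s)) \<circ> (\<lambda>m. m^2/4 - 1)) holomorphic_on S"
    by (rule holomorphic_on_compose_gen[OF _ holomorphic_on_even_comp_csqrt[OF r hol even]])
       (auto simp: S_def intro!: holomorphic_intros)
  moreover have "open S" unfolding S_def
    by (intro continuous_open_vimage open_ball) (auto intro!: continuous_intros)
  moreover have "complex_of_real 2 \<in> S" using r by (simp add: S_def)
  ultimately show ?thesis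
    by (rule real_analytic_at_holomorphic) (simp add: T_def)
qed

text \<open>Near the branch point the expression depends on \<open>\<mu>\<close> only through \<open>T(\<mu>)\<close>, since
  \<open>\<mu> = 2 \<surd>(1 + T(\<mu>)\<^sup>2)\<close>.\<close>
lemma real_analytic_at_comp_T_2:
  assumes z: "Im z > 0" and hol: "holomorphic_on_branches z E"
    and even: "\<And>m \<tau>. Im (z+\<tau>) > 0 \<Longrightarrow> Im (z-\<tau>) > 0 \<Longrightarrow> E m (-\<tau>) = E m \<tau>"
  shows "real_analytic_at (\<lambda>\<nu>. E (of_real \<nu>) (T \<nu>)) 2"
proof -
  define m where "m \<tau> = 2 * csqrt (1 + \<tau>^2)" for \<tau>
  define A where "A = ball 0 (Im z) \<inter> (\<lambda>\<tau>::complex. 1 + \<tau>^2) -` (- \<real>\<^sub>\<le>\<^sub>0)"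
  define B where "B = {\<tau> \<in> A. branch_ok z (m \<tau>) \<tau>}"
  have "open A" unfolding A_def
    by (intro open_Int open_ball continuous_open_vimage open_Compl closed_nonpos_Reals_complex)
       (auto intro!: continuous_intros)
  moreover have hol_m: "m holomorphic_on A" unfolding m_def A_def
    by (intro holomorphic_intros) auto
  ultimately have "open B" unfolding B_def
    by (intro open_branch_ok holomorphic_on_imp_continuous_on continuous_intros)
  moreover have "0 \<in> B" using z by (simp add: A_def B_def m_def branch_ok_def complex_nonpos_Reals_iff)
  ultimately obtain r where r: "r > 0" "ball 0 r \<subseteq> B" using openE by blast
  have "m holomorphic_on ball 0 r"
    using holomorphic_on_subset[OF hol_m] r(2) by (auto simp: B_def)
  then have "(\<lambda>\<tau>. E (m \<tau>) \<tau>) holomorphic_on ball 0 r"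
    by (rule holomorphic_on_branchesD[OF hol _ holomorphic_on_ident]) (use r(2) in \<open>auto simp: B_def\<close>)
  moreover have "E (m (-\<tau>)) (-\<tau>) = E (m \<tau>) \<tau>" if "\<tau> \<in> ball 0 r" for \<tau>
  proof -
    have "\<bar>Im \<tau>\<bar> < Im z"
      using that r(2) abs_Im_le_cmod[of \<tau>] by (force simp: B_def A_def)
    then show ?thesis using even[of \<tau>] by (simp add: m_def)
  qed
  ultimately have "real_analytic_at (\<lambda>\<nu>. E (m (T \<nu>)) (T \<nu>)) 2"
    by (rule real_analytic_at_even_comp_T[OF r(1)])
  moreover have "eventually (\<lambda>\<nu>. E (of_real \<nu>) (T \<nu>) = E (m (T \<nu>)) (T \<nu>)) (nhds 2)"
    using eventually_nhds_in_open[of "{0<..}" "2::real"]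
    by (rule eventually_mono) (simp_all add: m_def two_csqrt_one_plus_T_sq)
  ultimately show ?thesis by (rule real_analytic_at_eventually_eq)
qed

lemma real_analytic_at_comp_T:
  assumes z: "Im z > 0" and \<mu>: "\<mu> > 0" and seg: "z \<notin> closed_segment (- T \<mu>) (T \<mu>)"
    and hol: "holomorphic_on_branches z E"
    and even: "\<And>m \<tau>. Im (z+\<tau>) > 0 \<Longrightarrow> Im (z-\<tau>) > 0 \<Longrightarrow> E m (-\<tau>) = E m \<tau>"
  shows "real_analytic_at (\<lambda>\<nu>. E (of_real \<nu>) (T \<nu>)) \<mu>"
proof -
  have ok: "branch_ok z (of_real \<mu>) (T \<mu>)" by (rule branch_ok_T[OF z \<mu> seg])
  consider "\<mu> < 2" | "\<mu> = 2" | "\<mu> > 2" by linarith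
  then show ?thesis
  proof cases
    case 1
    define A where "A = (\<lambda>m::complex. 1 - m^2/4) -` (- \<real>\<^sub>\<le>\<^sub>0)"
    have "open A" unfolding A_def
      by (intro continuous_open_vimage open_Compl closed_nonpos_Reals_complex) (auto intro!: continuous_intros)
    moreover have "\<mu>^2 < 2^2" using 1 \<mu> by (intro power_strict_mono) auto
    then have "complex_of_real \<mu> \<in> A" unfolding A_def
      by (simp add: complex_nonpos_Reals_iff)
    moreover have "(\<lambda>m. \<i> * csqrt (1 - m^2/4)) holomorphic_on A"
      unfolding A_def by (intro holomorphic_intros) auto
    moreover have "\<i> * csqrt (1 - (of_real \<nu>)^2/4) = T \<nu>" if "complex_of_real \<nu> \<in> A" for \<nu>
      using that T_eq_ii_csqrt[of \<nu>] by (simp add: A_def complex_nonpos_Reals_iff)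
    ultimately show ?thesis by (rule real_analytic_at_comp_holomorphic_branch[OF hol _ _ _ _ ok])
  next
    case 2
    then show ?thesis using real_analytic_at_comp_T_2[OF z hol even] by simp
  next
    case 3
    define A where "A = (\<lambda>m::complex. m^2/4 - 1) -` (- \<real>\<^sub>\<le>\<^sub>0)"
    have "open A" unfolding A_def
      by (intro continuous_open_vimage open_Compl closed_nonpos_Reals_complex) (auto intro!: continuous_intros)
    moreover have "2^2 < \<mu>^2" using 3 by (intro power_strict_mono) auto
    then have "complex_of_real \<mu> \<in> A" unfolding A_def
      by (simp add: complex_nonpos_Reals_iff)
    moreover have "(\<lambda>m. csqrt (m^2/4 - 1)) holomorphic_on A"
      unfolding A_def by (intro holomorphic_intros) auto
    ultimately show ?thesis
      by (rule real_analytic_at_comp_holomorphic_branch[OF hol _ _ _ _ ok]) (simp add: T_def)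
  qed
qed

lemma has_field_derivative_f_upper:
  assumes "Im z > 0" "branch_ok z (of_real \<nu>) (T \<nu>)"
  shows "((\<lambda>w. f x t w \<nu>) has_field_derivative F_deriv x t z (of_real \<nu>) (T \<nu>)) (at z)"
  using assms(1)
  by (intro has_field_derivative_transform_within_open[OF has_field_derivative_F[OF assms(2)],
        of "{w. Im w > 0}"]) (auto simp: open_halfspace_Im_gt f_def f_upper_eq_F)

lemma has_field_derivative_f_lower:
  assumes "Im z < 0" "branch_ok (cnj z) (of_real \<nu>) (T \<nu>)"
  shows "((\<lambda>w. f x t w \<nu>) has_field_derivative cnj (F_deriv x t (cnj z) (of_real \<nu>) (T \<nu>))) (at z)"
  using assms(1)
  by (intro has_field_derivative_transform_within_open[OF
        has_field_derivative_cnj_cnj[OF has_field_derivative_F[OF assms(2)]], of "{w. Im w < 0}"])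
     (auto simp: open_halfspace_Im_lt f_def f_upper_eq_F)

lemma real_analytic_at_f_upper_half:
  assumes z: "Im z > 0" and \<mu>: "\<mu> > 0" and seg: "z \<notin> closed_segment (- T \<mu>) (T \<mu>)"
  shows "real_analytic_at (\<lambda>\<nu>. f x t z \<nu>) \<mu>"
    and "real_analytic_at (\<lambda>\<nu>. deriv (\<lambda>w. f x t w \<nu>) z) \<mu>"
proof -
  have "real_analytic_at (\<lambda>\<nu>. F x t z (of_real \<nu>) (T \<nu>)) \<mu>"
    by (rule real_analytic_at_comp_T[OF z \<mu> seg holomorphic_on_branches_F]) (rule F_even)
  then show "real_analytic_at (\<lambda>\<nu>. f x t z \<nu>) \<mu>"
    by (simp add: f_def f_upper_eq_F z less_imp_le)
  have "real_analytic_at (\<lambda>\<nu>. F_deriv x t z (of_real \<nu>) (T \<nu>)) \<mu>"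
    by (rule real_analytic_at_comp_T[OF z \<mu> seg holomorphic_on_branches_F_deriv]) (rule F_deriv_even)
  then show "real_analytic_at (\<lambda>\<nu>. deriv (\<lambda>w. f x t w \<nu>) z) \<mu>"
  proof (rule real_analytic_at_eventually_eq)
    show "eventually (\<lambda>\<nu>. deriv (\<lambda>w. f x t w \<nu>) z = F_deriv x t z (of_real \<nu>) (T \<nu>)) (nhds \<mu>)"
      using eventually_branch_ok_T[OF z \<mu> seg]
      by (rule eventually_mono) (rule DERIV_imp_deriv[OF has_field_derivative_f_upper[OF z]])
  qed
qed

lemma real_analytic_at_f_lower_half:
  assumes z: "Im z < 0" and \<mu>: "\<mu> > 0" and seg: "z \<notin> closed_segment (- T \<mu>) (T \<mu>)"
  shows "real_analytic_at (\<lambda>\<nu>. f x t z \<nu>) \<mu>"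
    and "real_analytic_at (\<lambda>\<nu>. deriv (\<lambda>w. f x t w \<nu>) z) \<mu>"
proof -
  have z': "Im (cnj z) > 0" using z by simp
  have seg': "cnj z \<notin> closed_segment (- T \<mu>) (T \<mu>)"
    using seg closed_segment_T_cnj[of z \<mu>] by blast
  have "real_analytic_at (\<lambda>\<nu>. F x t (cnj z) (of_real \<nu>) (T \<nu>)) \<mu>"
    by (rule real_analytic_at_comp_T[OF z' \<mu> seg' holomorphic_on_branches_F]) (rule F_even)
  then have "real_analytic_at (\<lambda>\<nu>. cnj (F x t (cnj z) (of_real \<nu>) (T \<nu>))) \<mu>"
    by (rule real_analytic_at_cnj)
  moreover have "f x t z = (\<lambda>\<nu>. cnj (F x t (cnj z) (of_real \<nu>) (T \<nu>)))"
    using z by (simp add: fun_eq_iff f_def f_upper_eq_F)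
  ultimately show "real_analytic_at (\<lambda>\<nu>. f x t z \<nu>) \<mu>" by simp
  have "real_analytic_at (\<lambda>\<nu>. F_deriv x t (cnj z) (of_real \<nu>) (T \<nu>)) \<mu>"
    by (rule real_analytic_at_comp_T[OF z' \<mu> seg' holomorphic_on_branches_F_deriv]) (rule F_deriv_even)
  then have "real_analytic_at (\<lambda>\<nu>. cnj (F_deriv x t (cnj z) (of_real \<nu>) (T \<nu>))) \<mu>"
    by (rule real_analytic_at_cnj)
  then show "real_analytic_at (\<lambda>\<nu>. deriv (\<lambda>w. f x t w \<nu>) z) \<mu>"
  proof (rule real_analytic_at_eventually_eq)
    show "eventually (\<lambda>\<nu>. deriv (\<lambda>w. f x t w \<nu>) z = cnj (F_deriv x t (cnj z) (of_real \<nu>) (T \<nu>)))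
        (nhds \<mu>)"
      using eventually_branch_ok_T[OF z' \<mu> seg']
      by (rule eventually_mono) (rule DERIV_imp_deriv[OF has_field_derivative_f_lower[OF z]])
  qed
qed

theorem lemma3p1:
  fixes x t :: real
  assumes "x > 0" and "t > 0"
  shows "\<forall>z \<mu>. \<mu> > 0 \<and> Im z \<noteq> 0 \<and> z \<notin> closed_segment (- T \<mu>) (T \<mu>) \<longrightarrow>
           real_analytic_at (\<lambda>\<nu>. f x t z \<nu>) \<mu> \<and>
           real_analytic_at (\<lambda>\<nu>. deriv (\<lambda>w. f x t w \<nu>) z) \<mu>"
proof (intro allI impI)
  fix z :: complex and \<mu> :: real
  assume "\<mu> > 0 \<and> Im z \<noteq> 0 \<and> z \<notin> closed_segment (- T \<mu>) (T \<mu>)"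
  then show "real_analytic_at (\<lambda>\<nu>. f x t z \<nu>) \<mu> \<and> real_analytic_at (\<lambda>\<nu>. deriv (\<lambda>w. f x t w \<nu>) z) \<mu>"
    using real_analytic_at_f_upper_half[of z \<mu> x t] real_analytic_at_f_lower_half[of z \<mu> x t]
    by (cases "Im z > 0") auto
qed

end
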